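(* Assume the setting described in the context (hypotheses on $f,v,\eta$, the mesh condition $h<1/C$ and the CFL condition). If $\rho^o_j \geq 0$ for all $j\in\mathbb{Z}$, then the approximate solution constructed by the scheme satisfies $\rho^n_j \geq 0$ for all $j\in\mathbb{Z}$ and all $n\in\mathbb{N}$.
   Context: Let $C>0$ and let $f\in C^2(\mathbb{R}^+\times\mathbb{R}\times\mathbb{R};\mathbb{R})$ satisfy $\sup_{t,x,\rho}|\partial_\rho f(t,x,\rho)|<+\infty$, $\sup_{t,x}|\partial_x f(t,x,\rho)|< C|\rho|$ and $\sup_{t,x}|\partial^2_{xx} f(t,x,\rho)|< C|\rho|$ for all $\rho$, and $f(t,x,0)=0$ for all $t,x$. Let $v\in (C^2\cap W^{1,\infty})(\mathbb{R};\mathbb{R})$ and $\eta\in (C^2\cap W^{2,\infty})(\mathbb{R};\mathbb{R})$. These are the data of the nonlocal conservation law $\partial_t\rho+\partial_x\big(f(t,x,\rho)\,v(\rho*\eta)\big)=0$, $\rho(0,x)=\rho^o(x)$, with $\rho^o\in L^\infty(\mathbb{R})$. Numerical scheme: fix a space step $h>0$ and time step $\tau>0$, set $\lambda=\tau/h$, $x_j=jh$, $x_{j+1/2}=(j+\tfrac12)h$, $t^n=n\tau$. Assume $h<1/C$ and the CFL condition $\lambda\,(1+2\|\partial_\rho f\|_{L^\infty})\|v\|_{L^\infty}\le 1/6$. Set $\rho^o_j=\frac1h\int_{x_{j-1/2}}^{x_{j+1/2}}\rho^o(x)\,dx$ and $\rho^{n+1}_j=\rho^n_j-\lambda\big(\mathbf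 f^n_{j+1/2}(\rho^n_j,\rho^n_{j+1})-\mathbf f^n_{j-1/2}(\rho^n_{j-1},\rho^n_j)\big)$, where $\mathbf f^n_{j+1/2}(\rho_1,\rho_2)=\frac{f(t^n,x_{j+1/2},\rho_1)+f(t^n,x_{j+1/2},\rho_2)}{2}\,v(c^n_{j+1/2})-\frac{1}{6\lambda}(\rho_2-\rho_1)$, $c^n_{j+1/2}=\sum_{k\in\mathbb{Z}} h\,\rho^n_{k+1/2}\,\eta_{j+1/2-k}$, with $\rho^n_{k+1/2}$ a convex combination of $\rho^n_k$ and $\rho^n_{k+1}$, and $\eta_{m+1/2}=\frac1h\int_{x_m}^{x_{m+1}}\eta(x)\,dx$ for $m\in\mathbb{Z}$. *)

theory Defs
  imports "HOL-Analysis.Analysis"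
begin

definition C2_on :: "'a::euclidean_space set \<Rightarrow> ('a \<Rightarrow> real) \<Rightarrow> bool" where
  "C2_on S g \<longleftrightarrow>
     (\<exists>(D :: 'a \<Rightarrow> ('a \<Rightarrow>\<^sub>L real)) (D2 :: 'a \<Rightarrow> ('a \<Rightarrow>\<^sub>L ('a \<Rightarrow>\<^sub>L real))).
        (\<forall>p\<in>S. (g has_derivative blinfun_apply (D p)) (at p within S)) \<and>
        (\<forall>p\<in>S. (D has_derivative blinfun_apply (D2 p)) (at p within S)) \<and>
        continuous_on S D2)"

definition eta_half :: "real \<Rightarrow> (real \<Rightarrow> real) \<Rightarrow> int \<Rightarrow> real" where
  "eta_half h \<eta> m = (1 / h) * integral {real_of_int m * h .. (real_of_int m + 1) * h} \<eta>"

definition init_avg :: "real \<Rightarrow> (real \<Rightarrow> real) \<Rightarrow> int \<Rightarrow> real" where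
  "init_avg h \<rho>o j = (1 / h) * (LINT x : {(real_of_int j - 1/2) * h .. (real_of_int j + 1/2) * h} | lborel. \<rho>o x)"

text \<open>Discrete convolution c^n_{j+1/2} = sum_k h * rho_{k+1/2} * eta_{j+1/2-k}, where
  rho_{k+1/2} = th k * rho_k + (1 - th k) * rho_{k+1} (a convex combination, 0 <= th k <= 1).\<close>
definition conv_c :: "real \<Rightarrow> (real \<Rightarrow> real) \<Rightarrow> (int \<Rightarrow> real) \<Rightarrow> (int \<Rightarrow> real) \<Rightarrow> int \<Rightarrow> real" where
  "conv_c h \<eta> th r j =
     (\<Sum>\<^sub>\<infinity>k\<in>(UNIV::int set). h * (th k * r k + (1 - th k) * r (k + 1)) * eta_half h \<eta> (j - k))"

definition num_flux :: "(real \<Rightarrow> real \<Rightarrow> real \<Rightarrow> real) \<Rightarrow> (real \<Rightarrow> real) \<Rightarrow> real \<Rightarrow>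
    real \<Rightarrow> real \<Rightarrow> real \<Rightarrow> real \<Rightarrow> real \<Rightarrow> real" where
  "num_flux f v lam t x c r1 r2 = (f t x r1 + f t x r2) / 2 * v c - (r2 - r1) / (6 * lam)"

end

theory Submission
  imports Defs
begin

text \<open>With \<open>\<lambda> = \<tau>/h\<close>, expanding the Lax--Friedrichs flux writes \<open>\<rho>\<^sup>n\<^sup>+\<^sup>1\<^sub>j\<close> as
  \<open>(2/3) \<rho>\<^sub>j + (1/6) \<rho>\<^sub>j\<^sub>-\<^sub>1 + (1/6) \<rho>\<^sub>j\<^sub>+\<^sub>1\<close> minus half of four transport terms
  \<open>\<lambda> f(t, x, \<rho>\<^sub>k) v(c)\<close>. Since \<open>f(t, x, 0) = 0\<close>, each of them is bounded by \<open>\<lambda> L V \<rho>\<^sub>k\<close>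
  with \<open>L = sup |\<partial>\<^sub>\<rho> f|\<close> and \<open>V = sup |v|\<close>, and the CFL condition gives \<open>\<lambda> L V \<le> 1/12\<close>:
  the convex weights dominate, and nonnegativity propagates by induction on \<open>n\<close>.
  The convolution values \<open>c\<close> enter only through \<open>|v(c)| \<le> V\<close>.\<close>

lemma C2_on_differentiable_last:
  fixes f :: "real \<Rightarrow> real \<Rightarrow> real \<Rightarrow> real"
  assumes "C2_on (A \<times> UNIV) (\<lambda>(t, x, r). f t x r)" "t \<in> A"
  shows "(\<lambda>s. f t x s) differentiable (at r)"
proof -
  obtain D where D: "\<forall>p\<in>A \<times> UNIV.
      ((\<lambda>(t, x, r). f t x r) has_derivative blinfun_apply (D p)) (at p within A \<times> UNIV)"
    using assms(1) unfolding C2_on_def by blast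
  have line: "((\<lambda>s. (t, x, s)) has_derivative (\<lambda>d. (0, 0, d))) (at r within UNIV)"
    by (auto intro!: derivative_eq_intros)
  have "((\<lambda>s. (\<lambda>(t, x, r). f t x r) (t, x, s))
      has_derivative (\<lambda>d. blinfun_apply (D (t, x, r)) (0, 0, d))) (at r within UNIV)"
    by (rule has_derivative_in_compose2[where g'="\<lambda>p. blinfun_apply (D p)" and t="A \<times> UNIV",
          OF _ _ _ line]) (use D assms(2) in auto)
  then show ?thesis
    unfolding differentiable_def by auto
qed

lemma abs_le_of_deriv_bound:
  fixes g :: "real \<Rightarrow> real"
  assumes "\<And>s. g differentiable (at s)" "g 0 = 0" "\<And>s. \<bar>deriv g s\<bar> \<le> L"
  shows "\<bar>g r\<bar> \<le> L * \<bar>r\<bar>"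
  using field_differentiable_bound[of UNIV g "deriv g" L r 0] assms
  by (simp add: DERIV_deriv_iff_real_differentiable)

lemma num_flux_step_nonneg:
  fixes f :: "real \<Rightarrow> real \<Rightarrow> real \<Rightarrow> real"
  assumes lam: "lam > 0"
    and nonneg: "a \<ge> 0" "b \<ge> 0" "c \<ge> 0"
    and f_bound: "\<And>x r. \<bar>f t x r\<bar> \<le> L * \<bar>r\<bar>"
    and v_bound: "\<bar>v cp\<bar> \<le> V" "\<bar>v cm\<bar> \<le> V"
    and CFL: "lam * (1 + 2 * L) * V \<le> 1/6"
  shows "0 \<le> b - lam * (num_flux f v lam t xp cp b c - num_flux f v lam t xm cm a b)"
proof -
  have "0 \<le> lam * V"
    using lam v_bound(1) by simp
  then have CFL_transport: "lam * L * V \<le> 1/12"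
    using CFL by (simp add: algebra_simps)
  have transport: "\<bar>lam * (f t x r * v w)\<bar> \<le> r / 12"
    if "r \<ge> 0" "\<bar>v w\<bar> \<le> V" for x r w
  proof -
    have "\<bar>f t x r * v w\<bar> \<le> (L * r) * V"
      unfolding abs_mult using f_bound[of x r] that by (intro mult_mono) auto
    then have "\<bar>lam * (f t x r * v w)\<bar> \<le> (lam * L * V) * r"
      using lam by (simp add: abs_mult mult_left_mono algebra_simps)
    also have "\<dots> \<le> r / 12"
      using mult_right_mono[OF CFL_transport \<open>r \<ge> 0\<close>] by simp
    finally show ?thesis .
  qed
  have "b - lam * (num_flux f v lam t xp cp b c - num_flux f v lam t xm cm a b)
      = 2/3 * b + c/6 + a/6 - (lam * (f t xp b * v cp) + lam * (f t xp c * v cp)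
          - lam * (f t xm a * v cm) - lam * (f t xm b * v cm)) / 2"
    using lam unfolding num_flux_def by (simp add: field_simps)
  also have "\<dots> \<ge> 0"
    using transport[OF nonneg(2) v_bound(1), of xp] transport[OF nonneg(3) v_bound(1), of xp]
      transport[OF nonneg(1) v_bound(2), of xm] transport[OF nonneg(2) v_bound(2), of xm] nonneg
    by (simp add: abs_le_iff)
  finally show ?thesis .
qed

theorem lemma2p2:
  fixes f :: "real \<Rightarrow> real \<Rightarrow> real \<Rightarrow> real"
    and v \<eta> \<rho>o :: "real \<Rightarrow> real"
    and C h \<tau> :: real
    and th :: "nat \<Rightarrow> int \<Rightarrow> real"
    and \<rho> :: "nat \<Rightarrow> int \<Rightarrow> real"
  assumes C_pos: "C > 0"
    and f_C2: "C2_on ({0..} \<times> UNIV) (\<lambda>(t, x, r). f t x r)"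
    and f_rho_bdd: "\<exists>M. \<forall>t x r. 0 \<le> t \<longrightarrow> \<bar>deriv (\<lambda>s. f t x s) r\<bar> \<le> M"
    and f_x_bdd: "\<forall>t x r. 0 \<le> t \<longrightarrow> \<bar>deriv (\<lambda>y. f t y r) x\<bar> \<le> C * \<bar>r\<bar>"
    and f_xx_bdd: "\<forall>t x r. 0 \<le> t \<longrightarrow> \<bar>deriv (\<lambda>y. deriv (\<lambda>z. f t z r) y) x\<bar> \<le> C * \<bar>r\<bar>"
    and f_zero: "\<forall>t x. 0 \<le> t \<longrightarrow> f t x 0 = 0"
    and v_C2: "C2_on UNIV v"
    and v_W1inf: "bounded (range v)" "bounded (range (deriv v))"
    and eta_C2: "C2_on UNIV \<eta>"
    and eta_W2inf: "bounded (range \<eta>)" "bounded (range (deriv \<eta>))"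
                   "bounded (range (deriv (deriv \<eta>)))"
    and rho0_Linf: "\<rho>o \<in> borel_measurable lborel" "\<exists>M. AE x in lborel. \<bar>\<rho>o x\<bar> \<le> M"
    and h_pos: "h > 0" and tau_pos: "\<tau> > 0"
    and mesh: "h < 1 / C"
    and CFL: "(\<tau> / h) * (1 + 2 * (SUP p \<in> {p :: real \<times> real \<times> real. 0 \<le> fst p}.
                   \<bar>deriv (\<lambda>s. f (fst p) (fst (snd p)) s) (snd (snd p))\<bar>))
                * (SUP y. \<bar>v y\<bar>) \<le> 1 / 6"
    and th_convex: "\<forall>n k. 0 \<le> th n k \<and> th n k \<le> 1"
    and init: "\<forall>j. \<rho> 0 j = init_avg h \<rho>o j"
    and step: "\<forall>n j. \<rho> (Suc n) j = \<rho> n j - (\<tau> / h) *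
        (num_flux f v (\<tau> / h) (real n * \<tau>) ((real_of_int j + 1/2) * h)
            (conv_c h \<eta> (th n) (\<rho> n) j) (\<rho> n j) (\<rho> n (j + 1))
       - num_flux f v (\<tau> / h) (real n * \<tau>) ((real_of_int j - 1/2) * h)
            (conv_c h \<eta> (th n) (\<rho> n) (j - 1)) (\<rho> n (j - 1)) (\<rho> n j))"
    and init_nonneg: "\<forall>j. init_avg h \<rho>o j \<ge> 0"
  shows "\<forall>n j. \<rho> n j \<ge> 0"
proof -
  define L where "L = (SUP p \<in> {p :: real \<times> real \<times> real. 0 \<le> fst p}.
                   \<bar>deriv (\<lambda>s. f (fst p) (fst (snd p)) s) (snd (snd p))\<bar>)"
  define V where "V = (SUP y. \<bar>v y\<bar>)"
  have deriv_le_L: "\<bar>deriv (\<lambda>s. f t x s) r\<bar> \<le> L" if "0 \<le> t" for t x r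
    unfolding L_def using f_rho_bdd that
    by (intro cSUP_upper2[where x="(t, x, r)"]) (auto simp: bdd_above_def)
  have v_le_V: "\<bar>v y\<bar> \<le> V" for y
    unfolding V_def using v_W1inf(1)
    by (intro cSUP_upper) (auto simp: bounded_iff bdd_above_def)
  have f_lipschitz: "\<bar>f t x r\<bar> \<le> L * \<bar>r\<bar>" if "0 \<le> t" for t x r
    using abs_le_of_deriv_bound C2_on_differentiable_last[OF f_C2] deriv_le_L f_zero that by simp
  have "0 \<le> \<rho> n j" for n j
  proof (induction n arbitrary: j)
    case 0
    then show ?case using init init_nonneg by simp
  next
    case (Suc n)
    have f_bound: "\<bar>f (real n * \<tau>) x r\<bar> \<le> L * \<bar>r\<bar>" for x r
      using f_lipschitz tau_pos by simp
    show ?case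
      unfolding step[rule_format]
      by (rule num_flux_step_nonneg[where f=f and v=v and L=L and V=V])
        (use Suc f_bound v_le_V CFL h_pos tau_pos in \<open>auto simp: L_def V_def\<close>)
  qed
  then show ?thesis by blast
qed

end
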